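(* Let $n,m\ge1$ and $C\in\mathbb{R}^{2m\times 2n}$. Suppose there exists a nonzero real $2n\times 2\ell$ matrix $T_1$ ($\ell\ge 1$) with $\mathrm{Range}(T_1)=\mathrm{Ker}(C)\cap\mathrm{Ker}(C\Sigma_n)$ and $\Sigma_nT_1=T_1\Sigma_\ell$. Let $G\in\mathbb{R}^{2n\times 2n}$ be symmetric and suppose $\mathrm{Range}(T_1)$ is invariant under $G$ (i.e. $G\,\mathrm{Range}(T_1)\subseteq\mathrm{Range}(T_1)$). Then the linear quantum system determined by $(G,C)$ has a DF subsystem with DF mode $T_1^\top\hat x$; that is, with $A=\Sigma_n(G+C^\top\Sigma_mC/2)$ and $\mathcal{O}=(C^\top,A^\top C^\top,\ldots,(A^\top)^{2n-1}C^\top)^\top$, one has $\mathcal{O}T_1=O$ and $\mathcal{O}\Sigma_nT_1=O$.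
   Context: For $k\ge1$, $\Sigma_k=\mathrm{diag}\{\Sigma,\ldots,\Sigma\}$ ($2k\times2k$) with $\Sigma=\begin{pmatrix}0&1\\-1&0\end{pmatrix}$. The linear quantum system determined by $(G,C)$ is $d\hat x=A\hat x\,dt+\Sigma_nC^\top\Sigma_m\,d\hat{\mathcal W}$, $d\hat{\mathcal W}^{\rm out}=C\hat x\,dt+d\hat{\mathcal W}$ with $A=\Sigma_n(G+C^\top\Sigma_mC/2)$, where $\hat x$ is a vector of $n$ canonical pairs with $\hat x\hat x^\top-(\hat x\hat x^\top)^\top=i\Sigma_n$. A DF mode is a variable $T^\top\hat x$ with $T^\top\Sigma_nT=\Sigma_\ell$ whose columns span a subspace lying in $\mathrm{Ker}(\mathcal{O})\cap\mathrm{Ker}(\mathcal{O}\Sigma_n)$ (equivalently uncontrollable w.r.t. the input $\hat{\mathcal W}$ and unobservable w.r.t. the output $\hat{\mathcal W}^{\rm out}$). *)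

theory Defs
  imports "Jordan_Normal_Form.Matrix_Kernel"
begin

(* Sigma_k = diag{Sigma,...,Sigma} (2k x 2k), Sigma = [[0,1],[-1,0]] *)
definition Sigma_mat :: "nat \<Rightarrow> real mat" where
  "Sigma_mat k = mat (2*k) (2*k) (\<lambda>(i,j).
      if i div 2 = j div 2 then (if even i \<and> odd j then 1 else if odd i \<and> even j then -1 else 0)
      else 0)"

definition mat_range :: "real mat \<Rightarrow> real vec set" where
  "mat_range T = {T *\<^sub>v x | x. x \<in> carrier_vec (dim_col T)}"

definition sys_A :: "nat \<Rightarrow> nat \<Rightarrow> real mat \<Rightarrow> real mat \<Rightarrow> real mat" where
  "sys_A n m G C = Sigma_mat n * (G + (1/2) \<cdot>\<^sub>m (transpose_mat C * Sigma_mat m * C))"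

(* observability matrix O = (C^T, A^T C^T, ..., (A^T)^(2n-1) C^T)^T,
   i.e. the vertical stack of the blocks C A^k, k = 0..2n-1 *)
definition obs_mat :: "nat \<Rightarrow> real mat \<Rightarrow> real mat \<Rightarrow> real mat" where
  "obs_mat n C A = mat ((2*n) * dim_row C) (dim_col C)
     (\<lambda>(i,j). (C * (A ^\<^sub>m (i div dim_row C))) $$ (i mod dim_row C, j))"

end

theory Submission
  imports Defs
begin

text \<open>The subspace \<open>K = Range T1\<close> lies in \<open>Ker C\<close>, is invariant under \<open>G\<close> by hypothesis and under
  \<open>\<Sigma>\<^sub>n\<close> because \<open>\<Sigma>\<^sub>n T1 = T1 \<Sigma>\<^sub>l\<close>. On \<open>Ker C\<close> the term \<open>C\<^sup>T \<Sigma>\<^sub>m C\<close> vanishes, so \<open>A\<close> acts on \<open>K\<close>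
  as \<open>\<Sigma>\<^sub>n G\<close>; hence \<open>K\<close> is \<open>A\<close>-invariant and every block \<open>C A\<^sup>k\<close> of \<open>O\<close> kills \<open>T1\<close>.
  Finally \<open>O \<Sigma>\<^sub>n T1 = O T1 \<Sigma>\<^sub>l\<close>.\<close>

lemma Sigma_mat_carrier [simp]: "Sigma_mat k \<in> carrier_mat (2*k) (2*k)"
  unfolding Sigma_mat_def by auto

lemma mat_range_subset_carrier:
  assumes "T \<in> carrier_mat nr nc"
  shows "mat_range T \<subseteq> carrier_vec nr"
  using assms unfolding mat_range_def by auto

lemma mult_mat_vec_in_mat_range:
  assumes "T \<in> carrier_mat nr nc" "x \<in> carrier_vec nc"
  shows "T *\<^sub>v x \<in> mat_range T"
  using assms unfolding mat_range_def by auto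

lemma col_in_mat_range:
  assumes "T \<in> carrier_mat nr nc" "j < nc"
  shows "col T j \<in> mat_range T"
proof -
  have "col T j = T *\<^sub>v unit_vec nc j"
    using assms by (metis col_mult2 col_one one_carrier_mat right_mult_one_mat)
  thus ?thesis using assms mult_mat_vec_in_mat_range by auto
qed

lemma mat_range_invariant_if_intertwined:
  assumes T: "T \<in> carrier_mat nr nc" and S: "S \<in> carrier_mat nr nr"
    and R: "R \<in> carrier_mat nc nc" and "S * T = T * R"
    and v: "v \<in> mat_range T"
  shows "S *\<^sub>v v \<in> mat_range T"
proof -
  obtain x where x: "x \<in> carrier_vec nc" "v = T *\<^sub>v x"
    using v T unfolding mat_range_def by auto
  have "S *\<^sub>v v = (S * T) *\<^sub>v x" using x S T by simp
  also have "\<dots> = T *\<^sub>v (R *\<^sub>v x)" using \<open>S * T = T * R\<close> x T R by simp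
  finally show ?thesis using T R x mult_mat_vec_in_mat_range by simp
qed

lemma pow_mat_invariant:
  assumes A: "A \<in> carrier_mat n n" and K: "K \<subseteq> carrier_vec n"
    and inv: "\<And>v. v \<in> K \<Longrightarrow> A *\<^sub>v v \<in> K" and v: "v \<in> K"
  shows "(A ^\<^sub>m k) *\<^sub>v v \<in> K"
  using v
proof (induction k arbitrary: v)
  case 0
  then show ?case using K by (auto simp: carrier_matD[OF A])
next
  case (Suc k)
  have "(A ^\<^sub>m Suc k) *\<^sub>v v = (A ^\<^sub>m k) *\<^sub>v (A *\<^sub>v v)"
    using A K Suc.prems by (auto simp: assoc_mult_mat_vec[of _ n n])
  then show ?case using Suc inv by simp
qed

lemma smult_mat_mult_vec:
  assumes "M \<in> carrier_mat nr nc" "v \<in> carrier_vec nc"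
  shows "(a \<cdot>\<^sub>m M) *\<^sub>v v = a \<cdot>\<^sub>v (M *\<^sub>v v)"
  using assms by (intro eq_vecI) (auto simp: smult_scalar_prod_distrib[of _ nc])

lemma sys_A_mult_vec_if_in_kernel:
  assumes C: "C \<in> carrier_mat (2*m) (2*n)" and G: "G \<in> carrier_mat (2*n) (2*n)"
    and v: "v \<in> carrier_vec (2*n)" and Cv: "C *\<^sub>v v = 0\<^sub>v (2*m)"
  shows "sys_A n m G C *\<^sub>v v = Sigma_mat n *\<^sub>v (G *\<^sub>v v)"
proof -
  define M where "M = transpose_mat C * Sigma_mat m * C"
  have M: "M \<in> carrier_mat (2*n) (2*n)" unfolding M_def using C by auto
  have "M *\<^sub>v v = 0\<^sub>v (2*n)"
    unfolding M_def using C v Cv by (auto simp: assoc_mult_mat_vec[of _ "2*n" "2*m"])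
  hence "((1/2) \<cdot>\<^sub>m M) *\<^sub>v v = 0\<^sub>v (2*n)"
    using M v by (auto simp: smult_mat_mult_vec intro!: eq_vecI)
  hence "(G + (1/2) \<cdot>\<^sub>m M) *\<^sub>v v = G *\<^sub>v v"
    using G M v by (simp add: add_mult_distrib_mat_vec[of _ "2*n" "2*n"])
  moreover have "G + (1/2) \<cdot>\<^sub>m M \<in> carrier_mat (2*n) (2*n)" using G M by auto
  ultimately show ?thesis
    unfolding sys_A_def M_def[symmetric]
    using assoc_mult_mat_vec[OF Sigma_mat_carrier _ v] by simp
qed

lemma mult_mat_eq_0_if_cols_in_kernel:
  fixes M T :: "'a :: semiring_0 mat"
  assumes M: "M \<in> carrier_mat nr nc" and T: "T \<in> carrier_mat nc p"
    and cols: "\<And>j. j < p \<Longrightarrow> M *\<^sub>v col T j = 0\<^sub>v nr"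
  shows "M * T = 0\<^sub>m nr p"
proof (rule eq_matI)
  fix i j assume "i < dim_row (0\<^sub>m nr p :: 'a mat)" "j < dim_col (0\<^sub>m nr p :: 'a mat)"
  then show "(M * T) $$ (i, j) = 0\<^sub>m nr p $$ (i, j)"
    using M T cols[of j] by (metis index_mult_mat(1,2,3) index_mult_mat_vec
        carrier_matD index_zero_mat(1,2,3) index_zero_vec(1))
qed (use M T in auto)

lemma obs_mat_carrier:
  assumes "C \<in> carrier_mat nr nc"
  shows "obs_mat n C A \<in> carrier_mat ((2*n) * nr) nc"
  using assms unfolding obs_mat_def by auto

lemma obs_mat_mult_eq_0:
  fixes C A T :: "real mat"
  assumes C: "C \<in> carrier_mat nr nc" and A: "A \<in> carrier_mat nc nc"
    and T: "T \<in> carrier_mat nc p"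
    and blocks: "\<And>k. C * A ^\<^sub>m k * T = 0\<^sub>m nr p"
  shows "obs_mat n C A * T = 0\<^sub>m ((2*n) * nr) p"
proof (rule eq_matI)
  fix i j assume i: "i < dim_row (0\<^sub>m ((2*n) * nr) p :: real mat)"
    and j: "j < dim_col (0\<^sub>m ((2*n) * nr) p :: real mat)"
  define k r where "k = i div nr" and "r = i mod nr"
  have r: "r < nr" unfolding r_def using i by (cases "nr = 0") auto
  have CA: "C * A ^\<^sub>m k \<in> carrier_mat nr nc" using C A by auto
  have "row (obs_mat n C A) i = row (C * A ^\<^sub>m k) r"
    using i r CA C unfolding obs_mat_def k_def r_def by (auto intro!: eq_vecI)
  have "(obs_mat n C A * T) $$ (i, j) = row (obs_mat n C A) i \<bullet> col T j"
    using i j T obs_mat_carrier[OF C, of n A] by (auto intro: index_mult_mat(1))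
  also have "\<dots> = (C * A ^\<^sub>m k * T) $$ (r, j)"
    using \<open>row (obs_mat n C A) i = _\<close> j r T CA by (auto simp: index_mult_mat(1))
  finally show "(obs_mat n C A * T) $$ (i, j) = 0\<^sub>m ((2*n) * nr) p $$ (i, j)"
    using blocks[of k] i j r by simp
qed (use C T in \<open>auto simp: obs_mat_def\<close>)

theorem proposition1:
  fixes n m l :: nat and C G T1 :: "real mat"
  assumes "n \<ge> 1" "m \<ge> 1" "l \<ge> 1"
    and "C \<in> carrier_mat (2*m) (2*n)"
    and "T1 \<in> carrier_mat (2*n) (2*l)"
    and "T1 \<noteq> 0\<^sub>m (2*n) (2*l)"
    and "mat_range T1 = mat_kernel C \<inter> mat_kernel (C * Sigma_mat n)"
    and "Sigma_mat n * T1 = T1 * Sigma_mat l"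
    and "G \<in> carrier_mat (2*n) (2*n)"
    and "transpose_mat G = G"
    and "\<forall>v \<in> mat_range T1. G *\<^sub>v v \<in> mat_range T1"
  shows "obs_mat n C (sys_A n m G C) * T1 = 0\<^sub>m ((2*n) * (2*m)) (2*l)
       \<and> obs_mat n C (sys_A n m G C) * Sigma_mat n * T1 = 0\<^sub>m ((2*n) * (2*m)) (2*l)"
proof -
  note C = assms(4) and T = assms(5) and G = assms(9) and intertwine = assms(8)
  define A where "A = sys_A n m G C"
  define Obs where "Obs = obs_mat n C A"
  have A: "A \<in> carrier_mat (2*n) (2*n)" unfolding A_def sys_A_def using C G
    by (intro mult_carrier_mat add_carrier_mat smult_carrier_mat) auto
  have K: "mat_range T1 \<subseteq> carrier_vec (2*n)" using mat_range_subset_carrier[OF T] .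
  have kernel: "C *\<^sub>v v = 0\<^sub>v (2*m)" if "v \<in> mat_range T1" for v
    using that C unfolding assms(7) mat_kernel_def by auto
  have A_inv: "A *\<^sub>v v \<in> mat_range T1" if v: "v \<in> mat_range T1" for v
    using sys_A_mult_vec_if_in_kernel[OF C G _ kernel[OF v]] v K assms(11)
      mat_range_invariant_if_intertwined[OF T _ _ intertwine] unfolding A_def by auto
  have "C * A ^\<^sub>m k * T1 = 0\<^sub>m (2*m) (2*l)" for k
  proof (rule mult_mat_eq_0_if_cols_in_kernel[OF _ T])
    show "C * A ^\<^sub>m k \<in> carrier_mat (2*m) (2*n)" using C A by auto
    fix j assume "j < 2*l"
    hence "col T1 j \<in> mat_range T1" using col_in_mat_range[OF T] by simp
    thus "(C * A ^\<^sub>m k) *\<^sub>v col T1 j = 0\<^sub>v (2*m)"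
      using assoc_mult_mat_vec[OF C pow_carrier_mat[OF A]] K kernel
        pow_mat_invariant[OF A K A_inv] by auto
  qed
  hence ObsT: "Obs * T1 = 0\<^sub>m ((2*n) * (2*m)) (2*l)"
    unfolding Obs_def using obs_mat_mult_eq_0[OF C A T] by blast
  have Obs: "Obs \<in> carrier_mat ((2*n) * (2*m)) (2*n)" unfolding Obs_def using obs_mat_carrier[OF C] .
  have "Obs * Sigma_mat n * T1 = (Obs * T1) * Sigma_mat l"
    using Obs T intertwine by (simp add: assoc_mult_mat[of _ _ "2*n" _ "2*n" _ "2*l"]
        assoc_mult_mat[of _ _ "2*n" _ "2*l" _ "2*l"])
  thus ?thesis using ObsT left_mult_zero_mat[OF Sigma_mat_carrier] unfolding Obs_def A_def by simp
qed

end
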